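(* Let $K\in C(\mathbb{R}^3\setminus\{0\})\cap L^\infty(\mathbb{R}^3)$ be homogeneous of degree $0$ (i.e. $K(\lambda x)=K(x)$ for all $\lambda>0$, $x\ne0$) and $(1,1)$-distance-orthogonal in $\mathbb{R}^3$. Then $K\equiv0$.
   Context: $K\in C(\mathbb{R}^n\setminus\{0\})\cap L^\infty(\mathbb{R}^n)$ is $(d,\alpha)$-distance-orthogonal if for every $d$-dimensional affine plane (here: line, $d=1$) $E$ and every $x\notin E$, $\int_EK(x-y)|x-y|^{-d-\alpha}\,d\mathcal H^d(y)=0$; here $n=3$, $d=1$, $\alpha=1$. *)

theory Defs
  imports "HOL-Analysis.Analysis"
begin

text \<open>The one-dimensional Hausdorff measure on the affine line
  E = {a + t u | t real} (with norm u = 1) is the push-forward of Lebesgue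
  measure on the real line under the unit-speed parametrisation t to a + t u.\<close>

definition affine_line :: "'a::real_normed_vector \<Rightarrow> 'a \<Rightarrow> 'a set" where
  "affine_line a u = {a + t *\<^sub>R u | t. True}"

definition line_distance_orthogonal ::
    "real \<Rightarrow> ('a::euclidean_space \<Rightarrow> real) \<Rightarrow> bool" where
  "line_distance_orthogonal \<alpha> K \<longleftrightarrow>
     (\<forall>a u x. norm u = 1 \<longrightarrow> x \<notin> affine_line a u \<longrightarrow>
        (let f = (\<lambda>t::real. K (x - (a + t *\<^sub>R u)) *
                    norm (x - (a + t *\<^sub>R u)) powr (- 1 - \<alpha>))
         in integrable lborel f \<and> integral\<^sup>L lborel f = 0))"

end

theory Submission
  imports Defs
begin

(* Testing orthogonality against the line through e in direction u (e, u orthonormal) and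
   substituting t = tan x, homogeneity shows that K integrates to zero over every half great
   circle. Hence K integrates to zero over every great circle, and differentiating the
   half-circle integral with respect to its starting point shows that K is even.

   Fix a pole n and let L z be the integral of K over the circle of latitude z. Averaging over
   the great circles tilted by a fixed angle against the equator turns the vanishing of
   great-circle integrals into the Abel-type equation: the integral of L (-s cos t) over
   0 <= t <= 2 pi vanishes for every 0 <= s <= 1. Integrating once more against the
   hemisphere weight (Archimedes' hat-box theorem) isolates the even part of L, so
   L 1 + L (-1) = 0, that is 2 pi (K n + K (-n)) = 0, and K n = 0 since K is even. *)

section \<open>Circle means of functions on [-1, 1]\<close>

lemma integral_sin_power_recurrence:
  "real (k + 2) * integral {0..pi/2} (\<lambda>x. sin x ^ (k + 2))
     = real (k + 1) * integral {0..pi/2} (\<lambda>x. sin x ^ k)"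
proof -
  let ?D = "\<lambda>x. real (k + 1) * sin x ^ k - real (k + 2) * sin x ^ (k + 2)"
  have "((\<lambda>x. sin x ^ (k + 1) * cos x) has_real_derivative ?D x) (at x)" for x
  proof -
    let ?E = "real (k + 1) * sin x ^ k * cos x * cos x - sin x ^ (k + 1) * sin x"
    have "((\<lambda>x. sin x ^ (k + 1) * cos x) has_real_derivative ?E) (at x)"
      by (rule derivative_eq_intros refl)+ simp
    moreover have "?E = ?D x + real (k + 1) * sin x ^ k * (cos x * cos x + sin x * sin x - 1)"
      by (simp add: power_add algebra_simps del: sin_cos_squared_add3)
    ultimately show ?thesis
      by simp
  qed
  then have "(?D has_integral sin (pi/2) ^ (k + 1) * cos (pi/2) - sin 0 ^ (k + 1) * cos 0) {0..pi/2}"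
    by (intro fundamental_theorem_of_calculus)
       (auto simp: has_real_derivative_iff_has_vector_derivative[symmetric]
         intro: has_field_derivative_at_within)
  moreover have "(?D has_integral real (k + 1) * integral {0..pi/2} (\<lambda>x. sin x ^ k)
      - real (k + 2) * integral {0..pi/2} (\<lambda>x. sin x ^ (k + 2))) {0..pi/2}"
    by (intro has_integral_diff has_integral_mult_right integrable_integral
        integrable_continuous_real continuous_intros)
  ultimately show ?thesis
    by (auto dest: has_integral_unique)
qed

lemma integral_cos_power_recurrence:
  "real (k + 2) * integral {0..2*pi} (\<lambda>x. cos x ^ (k + 2))
     = real (k + 1) * integral {0..2*pi} (\<lambda>x. cos x ^ k)"
proof -
  let ?D = "\<lambda>x. real (k + 2) * cos x ^ (k + 2) - real (k + 1) * cos x ^ k"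
  have "((\<lambda>x. cos x ^ (k + 1) * sin x) has_real_derivative ?D x) (at x)" for x
  proof -
    let ?E = "real (k + 1) * cos x ^ k * - sin x * sin x + cos x ^ (k + 1) * cos x"
    have "((\<lambda>x. cos x ^ (k + 1) * sin x) has_real_derivative ?E) (at x)"
      by (rule derivative_eq_intros refl)+ simp
    moreover have "?E = ?D x - real (k + 1) * cos x ^ k * (cos x * cos x + sin x * sin x - 1)"
      by (simp add: power_add algebra_simps del: sin_cos_squared_add3)
    ultimately show ?thesis
      by simp
  qed
  then have "(?D has_integral cos (2*pi) ^ (k + 1) * sin (2*pi) - cos 0 ^ (k + 1) * sin 0) {0..2*pi}"
    by (intro fundamental_theorem_of_calculus)
       (auto simp: has_real_derivative_iff_has_vector_derivative[symmetric]
         intro: has_field_derivative_at_within)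
  moreover have "(?D has_integral real (k + 2) * integral {0..2*pi} (\<lambda>x. cos x ^ (k + 2))
      - real (k + 1) * integral {0..2*pi} (\<lambda>x. cos x ^ k)) {0..2*pi}"
    by (intro has_integral_diff has_integral_mult_right integrable_integral
        integrable_continuous_real continuous_intros)
  ultimately show ?thesis
    by (auto dest: has_integral_unique)
qed

lemma integral_sin_power_Suc_times_integral_cos_power:
  "integral {0..pi/2} (\<lambda>x. sin x ^ (i + 1)) * integral {0..2*pi} (\<lambda>x. cos x ^ i)
     = pi * (1 + (-1) ^ i) / real (i + 1)"
proof (induction i rule: nat_induct2)
  case 0
  then show ?case
    by simp
next
  case 1
  then show ?case
    by simp
next
  case (step i)
  let ?b = "\<lambda>k. integral {0..pi/2} (\<lambda>x. sin x ^ k)"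
  let ?c = "\<lambda>k. integral {0..2*pi} (\<lambda>x. cos x ^ k)"
  have "real (i + 3) * real (i + 2) * (?b (i + 3) * ?c (i + 2))
      = (real (i + 3) * ?b (i + 1 + 2)) * (real (i + 2) * ?c (i + 2))"
    by (simp add: algebra_simps numeral_eq_Suc)
  also have "\<dots> = real (i + 2) * real (i + 1) * (?b (i + 1) * ?c i)"
    using integral_sin_power_recurrence[of "i + 1"] integral_cos_power_recurrence[of i]
    by (simp add: algebra_simps numeral_eq_Suc)
  also have "\<dots> = real (i + 2) * real (i + 1) * (pi * (1 + (-1) ^ i) / real (i + 1))"
    by (simp only: step.IH)
  also have "\<dots> = real (i + 2) * (pi * (1 + (-1) ^ i))"
    by (simp del: of_nat_add)
  finally have "real (i + 3) * (?b (i + 3) * ?c (i + 2)) = pi * (1 + (-1) ^ i)"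
    by (simp del: of_nat_add)
  then show ?case
    by (simp add: field_simps numeral_eq_Suc del: of_nat_add)
qed

lemma has_integral_power_0_to:
  assumes "0 \<le> s"
  shows "((\<lambda>x::real. x ^ i) has_integral s ^ (i + 1) / real (i + 1)) {0..s}"
proof -
  have "((\<lambda>x. x ^ (i + 1) / real (i + 1)) has_real_derivative x ^ i) (at x)" for x :: real
    using DERIV_cdivide[OF DERIV_pow[of "i + 1" x], of "real (i + 1)"] by simp
  then have "((\<lambda>x. x ^ i) has_integral s ^ (i + 1) / real (i + 1) - 0 ^ (i + 1) / real (i + 1)) {0..s}"
    by (intro fundamental_theorem_of_calculus assms)
       (auto simp: has_real_derivative_iff_has_vector_derivative[symmetric]
         intro: has_field_derivative_at_within)
  then show ?thesis
    by simp
qed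

(* Archimedes' hat-box theorem on the upper hemisphere of radius s in polar coordinates:
   s sin p cos t is the first coordinate and s sin p the area element divided by s. *)
lemma hemisphere_integral_polynomial:
  fixes g :: "real \<Rightarrow> real"
  assumes "polynomial_function g" and "0 \<le> s"
  shows "integral {0..pi/2} (\<lambda>p. s * sin p * integral {0..2*pi} (\<lambda>t. g (s * sin p * cos t)))
       = pi * integral {0..s} (\<lambda>x. g x + g (-x))"
proof -
  obtain a N where g: "g = (\<lambda>x. \<Sum>i\<le>N. a i * x ^ i)"
    using assms(1) real_polynomial_function_imp_sum real_polynomial_function_eq by metis
  let ?b = "\<lambda>k. integral {0..pi/2} (\<lambda>x. sin x ^ k)"
  let ?c = "\<lambda>k. integral {0..2*pi} (\<lambda>x. cos x ^ k)"
  have "((\<lambda>t. g (r * cos t)) has_integral (\<Sum>i\<le>N. a i * (r ^ i * ?c i))) {0..2*pi}" for r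
    unfolding g power_mult_distrib
    by (intro has_integral_sum finite_atMost has_integral_mult_right integrable_integral
        integrable_continuous_real continuous_intros)
  then have circle_integral:
      "integral {0..2*pi} (\<lambda>t. g (r * cos t)) = (\<Sum>i\<le>N. a i * (r ^ i * ?c i))" for r
    by (rule integral_unique)
  have circle: "s * sin p * integral {0..2*pi} (\<lambda>t. g (s * sin p * cos t))
      = (\<Sum>i\<le>N. a i * s ^ (i + 1) * ?c i * sin p ^ (i + 1))" for p
    unfolding circle_integral by (simp add: sum_distrib_left power_mult_distrib mult_ac)
  have "((\<lambda>p. \<Sum>i\<le>N. a i * s ^ (i + 1) * ?c i * sin p ^ (i + 1))
      has_integral (\<Sum>i\<le>N. a i * s ^ (i + 1) * ?c i * ?b (i + 1))) {0..pi/2}"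
    by (intro has_integral_sum finite_atMost has_integral_mult_right integrable_integral
        integrable_continuous_real continuous_intros)
  then have lhs: "integral {0..pi/2} (\<lambda>p. s * sin p * integral {0..2*pi} (\<lambda>t. g (s * sin p * cos t)))
      = (\<Sum>i\<le>N. a i * s ^ (i + 1) * (?b (i + 1) * ?c i))"
    unfolding circle by (simp add: integral_unique mult_ac)
  have "g x + g (-x) = (\<Sum>i\<le>N. a i * (1 + (-1) ^ i) * x ^ i)" for x
    unfolding g sum.distrib[symmetric] by (intro sum.cong) (simp_all add: power_minus' algebra_simps)
  moreover have "((\<lambda>x. \<Sum>i\<le>N. a i * (1 + (-1) ^ i) * x ^ i)
      has_integral (\<Sum>i\<le>N. a i * (1 + (-1) ^ i) * (s ^ (i + 1) / real (i + 1)))) {0..s}"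
    by (intro has_integral_sum finite_atMost has_integral_mult_right has_integral_power_0_to assms(2))
  ultimately have rhs: "integral {0..s} (\<lambda>x. g x + g (-x))
      = (\<Sum>i\<le>N. a i * (1 + (-1) ^ i) * (s ^ (i + 1) / real (i + 1)))"
    by (simp add: integral_unique)
  show ?thesis
    unfolding lhs rhs integral_sin_power_Suc_times_integral_cos_power sum_distrib_left
    by (intro sum.cong) (simp_all del: of_nat_add)
qed

lemma mult_cos_in_interval:
  fixes r t :: real
  shows "r \<in> {0..1} \<Longrightarrow> r * cos t \<in> {-1..1}"
proof -
  assume "r \<in> {0..1}"
  then have "\<bar>r * cos t\<bar> \<le> 1 * 1"
    unfolding abs_mult by (intro mult_mono) auto
  then show ?thesis
    by (auto simp: abs_le_iff)
qed

lemma abs_circle_integral_le: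
  fixes \<phi> :: "real \<Rightarrow> real"
  assumes "continuous_on {-1..1} \<phi>" and "\<And>x. x \<in> {-1..1} \<Longrightarrow> \<bar>\<phi> x\<bar> \<le> e" and "r \<in> {0..1}"
  shows "\<bar>integral {0..2*pi} (\<lambda>t. \<phi> (r * cos t))\<bar> \<le> e * (2*pi)"
proof -
  have "continuous_on {0..2*pi} (\<lambda>t. \<phi> (r * cos t))"
    using mult_cos_in_interval[OF assms(3)]
    by (intro continuous_on_compose2[OF assms(1)] continuous_intros) auto
  then show ?thesis
    using integral_bound[where 'a = real, unfolded real_norm_def, of 0 "2*pi" "\<lambda>t. \<phi> (r * cos t)" e]
      assms(2) mult_cos_in_interval[OF assms(3)]
    by simp
qed

lemma abs_hemisphere_integral_le:
  fixes g :: "real \<Rightarrow> real"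
  assumes g: "continuous_on UNIV g"
    and circle: "\<And>r. r \<in> {0..1} \<Longrightarrow> \<bar>integral {0..2*pi} (\<lambda>t. g (r * cos t))\<bar> \<le> B"
    and s: "s \<in> {0..1}"
  shows "\<bar>integral {0..pi/2} (\<lambda>p. s * sin p * integral {0..2*pi} (\<lambda>t. g (s * sin p * cos t)))\<bar>
    \<le> B * (pi/2)"
proof -
  have "continuous_on (UNIV \<times> cbox 0 (2*pi)) (\<lambda>(r, t). g (r * cos t))"
    unfolding case_prod_beta
    by (rule continuous_on_compose2[OF g]) (auto intro!: continuous_intros)
  from integral_continuous_on_param[OF this]
  have "continuous_on UNIV (\<lambda>r. integral {0..2*pi} (\<lambda>t. g (r * cos t)))"
    by (simp add: cbox_interval)
  then have "continuous_on {0..pi/2} (\<lambda>p. integral {0..2*pi} (\<lambda>t. g (s * sin p * cos t)))"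
    by (rule continuous_on_compose2[of UNIV _ _ "\<lambda>p. s * sin p", simplified])
       (intro continuous_intros)
  then have "\<bar>integral {0..pi/2} (\<lambda>p. s * sin p * integral {0..2*pi} (\<lambda>t. g (s * sin p * cos t)))\<bar>
      \<le> B * (pi/2 - 0)"
  proof (intro integral_bound[where 'a = real, unfolded real_norm_def] continuous_intros)
    fix p assume "p \<in> {0..pi/2}"
    then have "s * sin p \<in> {0..1}"
      using s sin_ge_zero[of p] sin_le_one[of p] mult_mono[of s 1 "sin p" 1] by auto
    then show "\<bar>s * sin p * integral {0..2*pi} (\<lambda>t. g (s * sin p * cos t))\<bar> \<le> B"
      using circle[of "s * sin p"] mult_mono[of "\<bar>s * sin p\<bar>" 1]
      by (auto simp: abs_mult)
  qed simp
  then show ?thesis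
    by simp
qed

lemma abs_integral_even_part_le:
  fixes m g :: "real \<Rightarrow> real"
  assumes m: "continuous_on {-1..1} m" and g: "polynomial_function g"
    and approx: "\<And>x. x \<in> {-1..1} \<Longrightarrow> \<bar>m x - g x\<bar> \<le> e"
    and circle: "\<And>r. r \<in> {0..1} \<Longrightarrow> integral {0..2*pi} (\<lambda>t. m (r * cos t)) = 0"
    and s: "s \<in> {0..1}"
  shows "\<bar>integral {0..s} (\<lambda>x. m x + m (-x))\<bar> \<le> (pi + 2) * e"
proof -
  have cont_g: "continuous_on A g" for A
    by (rule continuous_on_polymonial_function[OF g])
  have circle_g: "\<bar>integral {0..2*pi} (\<lambda>t. g (r * cos t))\<bar> \<le> e * (2*pi)" if r: "r \<in> {0..1}" for r
  proof -
    have "integral {0..2*pi} (\<lambda>t. g (r * cos t))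
        = integral {0..2*pi} (\<lambda>t. g (r * cos t) - m (r * cos t))"
      using circle[OF r] mult_cos_in_interval[OF r]
      by (subst integral_diff) (auto intro!: integrable_continuous_real continuous_on_compose2[OF m]
          continuous_on_compose2[OF cont_g] continuous_intros)
    also have "\<bar>\<dots>\<bar> \<le> e * (2*pi)"
      using approx r by (intro abs_circle_integral_le) (auto intro!: continuous_intros m cont_g
          simp: abs_minus_commute)
    finally show ?thesis .
  qed
  then have "pi * \<bar>integral {0..s} (\<lambda>x. g x + g (-x))\<bar> \<le> e * (2*pi) * (pi/2)"
    using hemisphere_integral_polynomial[OF g, of s] abs_hemisphere_integral_le[OF cont_g circle_g s] s
    by (simp add: abs_mult)
  then have poly_part: "\<bar>integral {0..s} (\<lambda>x. g x + g (-x))\<bar> \<le> pi * e"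
    by (simp add: mult.commute)
  have cont_m_even: "continuous_on {0..s} (\<lambda>x. m x + m (-x))"
    using s by (auto intro!: continuous_intros continuous_on_compose2[OF m])
  have cont_g_even: "continuous_on {0..s} (\<lambda>x. g x + g (-x))"
    by (auto intro!: continuous_intros continuous_on_compose2[OF cont_g])
  have "integral {0..s} (\<lambda>x. m x + m (-x)) - integral {0..s} (\<lambda>x. g x + g (-x))
      = integral {0..s} (\<lambda>x. (m x + m (-x)) - (g x + g (-x)))"
    by (intro integral_diff[symmetric] integrable_continuous_real cont_m_even cont_g_even)
  also have "\<bar>\<dots>\<bar> \<le> (2 * e) * (s - 0)"
  proof (intro integral_bound[where 'a = real, unfolded real_norm_def]
      continuous_on_diff cont_m_even cont_g_even)
    fix x assume "x \<in> {0..s}"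
    then have "x \<in> {-1..1}" "-x \<in> {-1..1}"
      using s by auto
    then show "\<bar>(m x + m (-x)) - (g x + g (-x))\<bar> \<le> 2 * e"
      using approx[of x] approx[of "-x"] by linarith
  qed (use s in simp)
  also have "\<dots> \<le> 2 * e"
    using s approx[of 0] by (auto intro: mult_left_le)
  finally show ?thesis
    using poly_part by (simp add: algebra_simps)
qed

lemma integral_vanishing_imp_zero:
  fixes h :: "real \<Rightarrow> real"
  assumes h: "continuous_on {a..b} h" and "a < b"
    and zero: "\<And>x. x \<in> {a..b} \<Longrightarrow> integral {a..x} h = 0"
    and x: "x \<in> {a..b}"
  shows "h x = 0"
proof -
  have "((\<lambda>u. integral {a..u} h) has_vector_derivative h x) (at x within {a..b})"
    by (rule integral_has_vector_derivative[OF h x])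
  moreover have "((\<lambda>u. integral {a..u} h) has_vector_derivative 0) (at x within {a..b})"
    by (rule has_vector_derivative_transform[where f = "\<lambda>_. 0"]) (use x zero in auto)
  ultimately show ?thesis
    using vector_derivative_unique_within_closed_interval[of a b x] \<open>a < b\<close> x by auto
qed

lemma even_part_at_1_eq_0_if_circle_means_vanish:
  fixes m :: "real \<Rightarrow> real"
  assumes m: "continuous_on {-1..1} m"
    and circle: "\<And>r. r \<in> {0..1} \<Longrightarrow> integral {0..2*pi} (\<lambda>t. m (r * cos t)) = 0"
  shows "m 1 + m (-1) = 0"
proof (rule integral_vanishing_imp_zero[where h = "\<lambda>x. m x + m (-x)" and a = 0 and b = 1])
  show "continuous_on {0..1} (\<lambda>x. m x + m (-x))"
    by (auto intro!: continuous_intros continuous_on_compose2[OF m])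
  fix s :: real assume s: "s \<in> {0..1}"
  have "\<bar>integral {0..s} (\<lambda>x. m x + m (-x))\<bar> \<le> e" if "e > 0" for e
  proof -
    obtain g where "polynomial_function g" and "\<forall>x\<in>{-1..1}. norm (m x - g x) < e / (pi + 2)"
      using Stone_Weierstrass_polynomial_function[OF compact_Icc m, of "e / (pi + 2)"] \<open>e > 0\<close>
      by (auto simp: add_pos_pos)
    then have "\<bar>integral {0..s} (\<lambda>x. m x + m (-x))\<bar> \<le> (pi + 2) * (e / (pi + 2))"
      by (intro abs_integral_even_part_le[OF m _ _ circle s]) (auto intro: less_imp_le)
    then show ?thesis
      using pi_gt_zero by simp
  qed
  then show "integral {0..s} (\<lambda>x. m x + m (-x)) = 0"
    using field_le_epsilon[of "\<bar>integral {0..s} (\<lambda>x. m x + m (-x))\<bar>" 0] by simp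
qed simp_all

section \<open>Integrals of the kernel over great circles and circles of latitude\<close>

lemma orthonormal_pair_orthogonal_to:
  fixes n :: "'a::euclidean_space"
  assumes n: "norm n = 1" and dim: "DIM('a) \<ge> 3"
  obtains f g where "norm f = 1" "norm g = 1" "n \<bullet> f = 0" "n \<bullet> g = 0" "f \<bullet> g = 0"
proof -
  obtain S where S: "n \<in> S" "pairwise orthogonal S" "\<And>x. x \<in> S \<Longrightarrow> norm x = 1" "card S = DIM('a)"
    using vector_in_orthonormal_basis[OF n] by metis
  then have "finite S"
    using dim by (intro card_ge_0_finite) simp
  then have "2 \<le> card (S - {n})"
    using S(1,4) dim by simp
  then obtain T where "T \<subseteq> S - {n}" "card T = 2"
    by (rule obtain_subset_with_card_n)
  then obtain f g where fg: "f \<in> S" "g \<in> S" "f \<noteq> n" "g \<noteq> n" "f \<noteq> g"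
    by (auto simp: card_2_iff)
  then have "n \<bullet> f = 0" "n \<bullet> g = 0" "f \<bullet> g = 0"
    using S(1,2) unfolding pairwise_def orthogonal_def by metis+
  moreover have "norm f = 1" "norm g = 1"
    using S(3) fg by simp_all
  ultimately show ?thesis
    by (intro that)
qed

lemma integral_periodic_shift:
  fixes h :: "real \<Rightarrow> 'a::banach"
  assumes h: "continuous_on UNIV h" and periodic: "\<And>x. h (x + T) = h x"
    and b: "0 \<le> b" "b \<le> T"
  shows "integral {0..T} (\<lambda>x. h (x + b)) = integral {0..T} h"
proof -
  have integrable: "h integrable_on {x..y}" for x y
    by (rule integrable_continuous_real[OF continuous_on_subset[OF h]]) simp
  have "integral {0..T} (\<lambda>x. h (x + b)) = integral {b..T + b} h"
    using integral_shift_real_ivl[of b b "T + b" h] by simp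
  also have "\<dots> = integral {b..T} h + integral {T..T + b} h"
    using b integrable by (intro Henstock_Kurzweil_Integration.integral_combine[symmetric]) auto
  also have "integral {T..T + b} h = integral {0..b} h"
    using integral_shift_real_ivl[of T T "T + b" h] periodic by simp
  also have "integral {b..T} h + integral {0..b} h = integral {0..T} h"
    using b integrable Henstock_Kurzweil_Integration.integral_combine[of 0 b T h]
    by (simp add: add.commute)
  finally show ?thesis .
qed

lemma polar_angle_exists:
  fixes x y r :: real
  assumes "x\<^sup>2 + y\<^sup>2 = r\<^sup>2" "0 \<le> r"
  obtains b where "0 \<le> b" "b \<le> 2*pi" "x = r * cos b" "y = r * sin b"
proof (cases "r = 0")
  case True
  then show ?thesis
    using assms(1) that[of 0] by simp
next
  case False
  then have "(x / r)\<^sup>2 + (y / r)\<^sup>2 = 1"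
    using assms(1) by (simp add: power_divide add_divide_distrib[symmetric])
  then obtain b where "0 \<le> b" "b < 2*pi" "x / r = cos b" "y / r = sin b"
    by (rule sincos_total_2pi)
  then show ?thesis
    using False that[of b] by (simp add: field_simps)
qed

lemma norm_orthonormal_combination:
  fixes e u :: "'a::real_inner"
  assumes "norm e = 1" "norm u = 1" "e \<bullet> u = 0"
  shows "norm (a *\<^sub>R e + b *\<^sub>R u) = sqrt (a\<^sup>2 + b\<^sup>2)"
proof -
  have "e \<bullet> e = 1" "u \<bullet> u = 1" "u \<bullet> e = 0"
    using assms by (simp_all add: norm_eq_1 inner_commute)
  then show ?thesis
    by (simp add: norm_eq_sqrt_inner inner_add_left inner_add_right assms(3) power2_eq_square)
qed

lemma inner_orthonormal_combination3:
  fixes n f g :: "'a::real_inner"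
  assumes "norm n = 1" "norm f = 1" "norm g = 1" "n \<bullet> f = 0" "n \<bullet> g = 0" "f \<bullet> g = 0"
  shows "(a *\<^sub>R n + b *\<^sub>R f + c *\<^sub>R g) \<bullet> (a' *\<^sub>R n + b' *\<^sub>R f + c' *\<^sub>R g) = a * a' + b * b' + c * c'"
proof -
  have "n \<bullet> n = 1" "f \<bullet> f = 1" "g \<bullet> g = 1" "f \<bullet> n = 0" "g \<bullet> n = 0" "g \<bullet> f = 0"
    using assms by (simp_all add: norm_eq_1 inner_commute)
  then show ?thesis
    by (simp add: inner_add_left inner_add_right assms)
qed

lemma norm_orthonormal_combination3:
  fixes n f g :: "'a::real_inner"
  assumes "norm n = 1" "norm f = 1" "norm g = 1" "n \<bullet> f = 0" "n \<bullet> g = 0" "f \<bullet> g = 0"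
  shows "norm (a *\<^sub>R n + b *\<^sub>R f + c *\<^sub>R g) = sqrt (a\<^sup>2 + b\<^sup>2 + c\<^sup>2)"
  by (simp add: norm_eq_sqrt_inner inner_orthonormal_combination3[OF assms] power2_eq_square)

definition latitude_integral :: "('a::real_vector \<Rightarrow> real) \<Rightarrow> 'a \<Rightarrow> 'a \<Rightarrow> 'a \<Rightarrow> real \<Rightarrow> real" where
  "latitude_integral K n f g z =
     integral {0..2*pi} (\<lambda>a. K (z *\<^sub>R n + sqrt (1 - z\<^sup>2) *\<^sub>R (cos a *\<^sub>R f + sin a *\<^sub>R g)))"

locale homogeneous_orthogonal_kernel =
  fixes K :: "'a::euclidean_space \<Rightarrow> real"
  assumes continuous: "continuous_on (UNIV - {0}) K"
    and homogeneous: "\<And>c x. c > 0 \<Longrightarrow> x \<noteq> 0 \<Longrightarrow> K (c *\<^sub>R x) = K x"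
    and orthogonal: "line_distance_orthogonal 1 K"
begin

lemma continuous_on_compose_unit:
  assumes "continuous_on S p" and "\<And>x. x \<in> S \<Longrightarrow> norm (p x) = 1"
  shows "continuous_on S (\<lambda>x. K (p x))"
proof (rule continuous_on_compose2[OF continuous assms(1)])
  show "p ` S \<subseteq> UNIV - {0}"
    using assms(2) by fastforce
qed

context
  fixes e u :: 'a
  assumes e: "norm e = 1" and u: "norm u = 1" and eu: "e \<bullet> u = 0"
begin

lemma norm_great_circle: "norm (cos t *\<^sub>R e + sin t *\<^sub>R u) = 1"
  using norm_orthonormal_combination[OF e u eu] by simp

lemma continuous_on_great_circle: "continuous_on UNIV (\<lambda>t. K (cos t *\<^sub>R e + sin t *\<^sub>R u))"
  by (intro continuous_on_compose_unit norm_great_circle continuous_intros)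

lemma line_integral_eq_0:
  "integrable lborel (\<lambda>t. K (e + t *\<^sub>R u) / (1 + t\<^sup>2))"
  "integral\<^sup>L lborel (\<lambda>t. K (e + t *\<^sub>R u) / (1 + t\<^sup>2)) = 0"
proof -
  define f where "f t = K (e + t *\<^sub>R u) / (1 + t\<^sup>2)" for t
  have norm_line: "norm (e + t *\<^sub>R u) = sqrt (1 + t\<^sup>2)" for t
    using norm_orthonormal_combination[OF e u eu, of 1 t] by simp
  have off_line: "e \<notin> affine_line 0 (-u)"
  proof
    assume "e \<in> affine_line 0 (-u)"
    then obtain t where "e = t *\<^sub>R - u"
      by (auto simp: affine_line_def)
    then have "norm (e + t *\<^sub>R u) = 0"
      by simp
    with norm_line[of t] show False
      by (simp add: add_nonneg_eq_0_iff)
  qed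
  have integrand: "(\<lambda>t. K (e - (0 + t *\<^sub>R - u)) * norm (e - (0 + t *\<^sub>R - u)) powr (- 1 - 1)) = f"
  proof
    fix t
    have "norm (e + t *\<^sub>R u) powr (- 1 - 1) = inverse (norm (e + t *\<^sub>R u) ^ 2)"
      using norm_line[of t] by (simp add: powr_minus powr_numeral add_pos_nonneg)
    then show "K (e - (0 + t *\<^sub>R - u)) * norm (e - (0 + t *\<^sub>R - u)) powr (- 1 - 1) = f t"
      using norm_line[of t] by (simp add: f_def divide_inverse add_pos_nonneg)
  qed
  have "norm (- u) = 1"
    using u by simp
  with orthogonal off_line show "integrable lborel f" "integral\<^sup>L lborel f = 0"
    unfolding line_distance_orthogonal_def Let_def integrand[symmetric] by blast+
qed

lemma half_great_circle_integral_eq_0: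
  "integral {-(pi/2)..pi/2} (\<lambda>t. K (cos t *\<^sub>R e + sin t *\<^sub>R u)) = 0"
proof -
  define f where "f t = K (e + t *\<^sub>R u) / (1 + t\<^sup>2)" for t
  have "tan ` {-(pi/2)<..<pi/2} = UNIV"
  proof -
    have "y \<in> tan ` {-(pi/2)<..<pi/2}" for y
      using arctan_lbound[of y] arctan_ubound[of y]
      by (intro image_eqI[of y tan "arctan y"]) (auto simp: tan_arctan)
    then show ?thesis
      by blast
  qed
  with line_integral_eq_0[folded f_def[abs_def]]
  have "f absolutely_integrable_on tan ` {-(pi/2)<..<pi/2}" "integral (tan ` {-(pi/2)<..<pi/2}) f = 0"
    by (simp_all add: absolutely_integrable_on_def integrable_on_lborel integral_lborel)
  then have change: "integral {-(pi/2)<..<pi/2} (\<lambda>x. \<bar>inverse (cos x ^ 2)\<bar> * f (tan x)) = 0"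
  proof (intro has_absolute_integral_change_of_variables_1'[where g = tan and f = f
      and g' = "\<lambda>x. inverse (cos x ^ 2)", THEN iffD2, THEN conjunct2] conjI)
    show "inj_on tan {-(pi/2)<..<pi/2}"
      by (intro inj_on_inverseI[of _ arctan]) (auto intro: arctan_tan)
    show "(tan has_field_derivative inverse (cos x ^ 2)) (at x within {-(pi/2)<..<pi/2})"
      if "x \<in> {-(pi/2)<..<pi/2}" for x
      using that cos_gt_zero_pi[of x]
      by (intro DERIV_tan[THEN has_field_derivative_at_within]) auto
  qed auto
  \<comment> \<open>The Jacobian cancels against 1 + tan x ^ 2; homogeneity removes the remaining factor cos x.\<close>
  have "\<bar>inverse (cos x ^ 2)\<bar> * f (tan x) = K (cos x *\<^sub>R e + sin x *\<^sub>R u)"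
    if "x \<in> {-(pi/2)<..<pi/2}" for x
  proof -
    have "cos x > 0"
      using that by (auto intro: cos_gt_zero_pi)
    then have "\<bar>inverse (cos x ^ 2)\<bar> * f (tan x) = K (e + tan x *\<^sub>R u)"
      by (simp add: f_def tan_def power_divide field_simps)
    also have "\<dots> = K (cos x *\<^sub>R (e + tan x *\<^sub>R u))"
      using \<open>cos x > 0\<close> norm_orthonormal_combination[OF e u eu, of 1 "tan x"]
      by (intro homogeneous[symmetric]) (auto simp: add_nonneg_eq_0_iff)
    also have "cos x *\<^sub>R (e + tan x *\<^sub>R u) = cos x *\<^sub>R e + sin x *\<^sub>R u"
      using \<open>cos x > 0\<close> by (simp add: tan_def scaleR_add_right)
    finally show ?thesis .
  qed
  then have "integral {-(pi/2)<..<pi/2} (\<lambda>t. K (cos t *\<^sub>R e + sin t *\<^sub>R u))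
      = integral {-(pi/2)<..<pi/2} (\<lambda>x. \<bar>inverse (cos x ^ 2)\<bar> * f (tan x))"
    by (intro integral_cong) simp
  then show ?thesis
    using change by (simp add: integral_open_interval_real)
qed

end

lemma shifted_half_great_circle_integral_eq_0:
  assumes e: "norm e = 1" and u: "norm u = 1" and eu: "e \<bullet> u = 0"
  shows "integral {d - pi/2..d + pi/2} (\<lambda>t. K (cos t *\<^sub>R e + sin t *\<^sub>R u)) = 0"
proof -
  define e' where "e' = cos d *\<^sub>R e + sin d *\<^sub>R u"
  define u' where "u' = (- sin d) *\<^sub>R e + cos d *\<^sub>R u"
  have "e \<bullet> e = 1" "u \<bullet> u = 1" "u \<bullet> e = 0"
    using e u eu by (simp_all add: norm_eq_1 inner_commute)
  then have "e' \<bullet> u' = 0"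
    by (simp add: e'_def u'_def inner_add_left inner_add_right eu algebra_simps)
  moreover have "norm e' = 1" "norm u' = 1"
    using norm_orthonormal_combination[OF e u eu, of "cos d" "sin d"]
      norm_orthonormal_combination[OF e u eu, of "- sin d" "cos d"]
    by (simp_all add: e'_def u'_def)
  moreover have "cos t *\<^sub>R e' + sin t *\<^sub>R u' = cos (t + d) *\<^sub>R e + sin (t + d) *\<^sub>R u" for t
    by (simp add: e'_def u'_def cos_add sin_add algebra_simps)
  ultimately have "integral {-(pi/2)..pi/2} (\<lambda>t. K (cos (t + d) *\<^sub>R e + sin (t + d) *\<^sub>R u)) = 0"
    using half_great_circle_integral_eq_0[of e' u'] by simp
  then show ?thesis
    using integral_shift_real_ivl[of "d - pi/2" d "d + pi/2" "\<lambda>t. K (cos t *\<^sub>R e + sin t *\<^sub>R u)"]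
    by simp
qed

lemma great_circle_integral_eq_0:
  assumes e: "norm e = 1" and u: "norm u = 1" and eu: "e \<bullet> u = 0"
  shows "integral {0..2*pi} (\<lambda>t. K (cos t *\<^sub>R e + sin t *\<^sub>R u)) = 0"
proof -
  let ?G = "\<lambda>t. K (cos t *\<^sub>R e + sin t *\<^sub>R u)"
  have "integral {0..pi} ?G + integral {pi..2*pi} ?G = integral {0..2*pi} ?G"
    by (intro Henstock_Kurzweil_Integration.integral_combine integrable_continuous_real
        continuous_on_subset[OF continuous_on_great_circle[OF e u eu]]) auto
  moreover have "integral {0..pi} ?G = 0" "integral {pi..2*pi} ?G = 0"
    using shifted_half_great_circle_integral_eq_0[OF e u eu, of "pi/2"]
      shifted_half_great_circle_integral_eq_0[OF e u eu, of "3*pi/2"]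
    by simp_all
  ultimately show ?thesis
    by simp
qed

lemma antipodal_eq:
  assumes e: "norm e = 1" and u: "norm u = 1" and eu: "e \<bullet> u = 0"
  shows "K (-u) = K u"
proof -
  let ?G = "\<lambda>t. K (cos t *\<^sub>R e + sin t *\<^sub>R u)"
  note cont_G = continuous_on_great_circle[OF e u eu]
  define F where "F x = integral {-pi..x} ?G" for x
  have F_deriv: "(F has_real_derivative ?G x) (at x)" if "x \<in> {-pi<..<pi}" for x
  proof -
    have "(F has_real_derivative ?G x) (at x within {-pi..pi})"
      unfolding F_def using that
      by (intro integral_has_real_derivative continuous_on_subset[OF cont_G]) auto
    then show ?thesis
      using that by (simp add: at_within_Icc_at)
  qed
  have half_pi: "pi/2 \<in> {-pi<..<pi}" "-(pi/2) \<in> {-pi<..<pi}"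
    unfolding greaterThanLessThan_iff using pi_gt_zero by (intro conjI; linarith)+
  have "F (d + pi/2) - F (d - pi/2) = 0" if "d \<in> {-(pi/2)<..<pi/2}" for d
  proof -
    have "integral {-pi..d - pi/2} ?G + integral {d - pi/2..d + pi/2} ?G
        = integral {-pi..d + pi/2} ?G"
      using that
      by (intro Henstock_Kurzweil_Integration.integral_combine integrable_continuous_real
          continuous_on_subset[OF cont_G]) auto
    then show ?thesis
      unfolding F_def using shifted_half_great_circle_integral_eq_0[OF e u eu, of d] by simp
  qed
  then have "((\<lambda>d. F (d + pi/2) - F (d - pi/2)) has_real_derivative 0) (at 0)"
    by (intro has_field_derivative_transform_within_open[OF DERIV_const, of "{-(pi/2)<..<pi/2}"]) auto
  moreover have "((\<lambda>d. F (d + pi/2)) has_real_derivative ?G (pi/2)) (at 0)"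
    using DERIV_shift[of F "?G (pi/2)" 0 "pi/2"] F_deriv[OF half_pi(1)] by simp
  moreover have "((\<lambda>d. F (d - pi/2)) has_real_derivative ?G (-(pi/2))) (at 0)"
    using DERIV_shift[of F "?G (-(pi/2))" 0 "-(pi/2)"] F_deriv[OF half_pi(2)] by simp
  ultimately have "?G (pi/2) - ?G (-(pi/2)) = 0"
    using DERIV_unique DERIV_diff by blast
  then show ?thesis
    by simp
qed

context
  fixes n f g :: 'a
  assumes n: "norm n = 1" and f: "norm f = 1" and g: "norm g = 1"
    and nf: "n \<bullet> f = 0" and ng: "n \<bullet> g = 0" and fg: "f \<bullet> g = 0"
begin

lemma norm_latitude_point:
  assumes "z\<^sup>2 \<le> 1"
  shows "norm (z *\<^sub>R n + sqrt (1 - z\<^sup>2) *\<^sub>R (cos a *\<^sub>R f + sin a *\<^sub>R g)) = 1"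
  using norm_orthonormal_combination3[OF n f g nf ng fg,
      of z "sqrt (1 - z\<^sup>2) * cos a" "sqrt (1 - z\<^sup>2) * sin a"] assms
  by (simp add: scaleR_add_right power_mult_distrib algebra_simps flip: distrib_left)

lemma latitude_integral_rotated:
  assumes w: "w\<^sup>2 \<le> 1" and xy: "x\<^sup>2 + y\<^sup>2 = 1 - w\<^sup>2"
  shows "integral {0..2*pi} (\<lambda>a. K (w *\<^sub>R n + (x * cos a - y * sin a) *\<^sub>R f
      + (x * sin a + y * cos a) *\<^sub>R g)) = latitude_integral K n f g w"
proof -
  define r where "r = sqrt (1 - w\<^sup>2)"
  have "x\<^sup>2 + y\<^sup>2 = r\<^sup>2"
    using xy w by (simp add: r_def)
  then obtain b where b: "0 \<le> b" "b \<le> 2*pi" "x = r * cos b" "y = r * sin b"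
    by (rule polar_angle_exists) (simp add: r_def w)
  define h where "h a = K (w *\<^sub>R n + r *\<^sub>R (cos a *\<^sub>R f + sin a *\<^sub>R g))" for a
  have "w *\<^sub>R n + (x * cos a - y * sin a) *\<^sub>R f + (x * sin a + y * cos a) *\<^sub>R g = 
      w *\<^sub>R n + r *\<^sub>R (cos (a + b) *\<^sub>R f + sin (a + b) *\<^sub>R g)" for a
    by (simp add: b(3,4) cos_add sin_add scaleR_add_right algebra_simps)
  then have "integral {0..2*pi} (\<lambda>a. K (w *\<^sub>R n + (x * cos a - y * sin a) *\<^sub>R f
      + (x * sin a + y * cos a) *\<^sub>R g)) = integral {0..2*pi} (\<lambda>a. h (a + b))"
    by (simp add: h_def add.assoc)
  also have "\<dots> = integral {0..2*pi} h"
  proof (rule integral_periodic_shift[OF _ _ b(1,2)])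
    show "continuous_on UNIV h"
      unfolding h_def r_def using norm_latitude_point[OF w]
      by (intro continuous_on_compose_unit) (auto intro!: continuous_intros)
  qed (simp add: h_def)
  finally show ?thesis
    unfolding latitude_integral_def h_def[abs_def] r_def .
qed

lemma integral_latitude_integral_eq_0:
  assumes s: "0 \<le> s" "s \<le> 1"
  shows "integral {0..2*pi} (\<lambda>t. latitude_integral K n f g (- (s * cos t))) = 0"
proof -
  define c where "c = sqrt (1 - s\<^sup>2)"
  have c2: "c\<^sup>2 = 1 - s\<^sup>2"
    using s by (simp add: c_def power_le_one)
  \<comment> \<open>For fixed a, t \<mapsto> P a t is a great circle; for fixed t, a \<mapsto> P a t runs over the
    circle of latitude -s cos t.\<close>
  define P where "P a t = (- (s * cos t)) *\<^sub>R n + (c * cos t * cos a - sin t * sin a) *\<^sub>R f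
      + (c * cos t * sin a + sin t * cos a) *\<^sub>R g" for a t
  define e1 where "e1 a = (- s) *\<^sub>R n + (c * cos a) *\<^sub>R f + (c * sin a) *\<^sub>R g" for a
  define e2 where "e2 a = 0 *\<^sub>R n + (- sin a) *\<^sub>R f + cos a *\<^sub>R g" for a
  have "(- s)\<^sup>2 + (c * cos a)\<^sup>2 + (c * sin a)\<^sup>2 = s\<^sup>2 + c\<^sup>2 * ((cos a)\<^sup>2 + (sin a)\<^sup>2)" for a
    by (simp only: power2_minus power_mult_distrib distrib_left add.assoc)
  then have e1: "norm (e1 a) = 1" for a
    unfolding e1_def norm_orthonormal_combination3[OF n f g nf ng fg] using c2 by simp
  have e2: "norm (e2 a) = 1" for a
    unfolding e2_def norm_orthonormal_combination3[OF n f g nf ng fg] by simp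
  have e12: "e1 a \<bullet> e2 a = 0" for a
    unfolding e1_def e2_def inner_orthonormal_combination3[OF n f g nf ng fg] by simp
  have P_great_circle: "P a t = cos t *\<^sub>R e1 a + sin t *\<^sub>R e2 a" for a t
    by (simp add: P_def e1_def e2_def algebra_simps)
  have latitude: "integral {0..2*pi} (\<lambda>a. K (P a t)) = latitude_integral K n f g (- (s * cos t))" for t
  proof (unfold P_def, rule latitude_integral_rotated)
    show "(- (s * cos t))\<^sup>2 \<le> 1"
      unfolding power2_minus power_mult_distrib using s
      by (intro mult_le_one) (auto simp: power_le_one abs_square_le_1)
    show "(c * cos t)\<^sup>2 + (sin t)\<^sup>2 = 1 - (- (s * cos t))\<^sup>2"
      using sin_cos_squared_add[of t] unfolding power_mult_distrib power2_minus c2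
      by (simp add: algebra_simps)
  qed
  have "continuous_on UNIV (\<lambda>(a, t). K (P a t))"
    using norm_great_circle[OF e1 e2 e12]
    unfolding P_great_circle case_prod_beta
    by (intro continuous_on_compose_unit) (auto simp: e1_def e2_def intro!: continuous_intros)
  then have "integral {0..2*pi} (\<lambda>t. integral {0..2*pi} (\<lambda>a. K (P a t)))
      = integral {0..2*pi} (\<lambda>a. integral {0..2*pi} (\<lambda>t. K (P a t)))"
    using integral_swap_continuous[of 0 0 "2*pi" "2*pi" "\<lambda>a t. K (P a t)"]
    by (simp add: cbox_Pair_eq cbox_interval continuous_on_subset)
  also have "\<dots> = 0"
    unfolding P_great_circle great_circle_integral_eq_0[OF e1 e2 e12] by simp
  finally show ?thesis
    unfolding latitude .
qed

lemma continuous_on_latitude_integral: "continuous_on {-1..1} (latitude_integral K n f g)"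
proof -
  have "continuous_on ({-1..1} \<times> cbox 0 (2*pi))
      (\<lambda>(z, a). K (z *\<^sub>R n + sqrt (1 - z\<^sup>2) *\<^sub>R (cos a *\<^sub>R f + sin a *\<^sub>R g)))"
    unfolding case_prod_beta
    by (intro continuous_on_compose_unit)
       (auto intro!: continuous_intros norm_latitude_point simp: abs_square_le_1)
  from integral_continuous_on_param[OF this] show ?thesis
    by (simp add: latitude_integral_def cbox_interval)
qed

lemma kernel_at_unit_eq_0: "K n = 0"
proof -
  let ?m = "\<lambda>x. latitude_integral K n f g (- x)"
  have "continuous_on {-1..1} ?m"
    by (rule continuous_on_compose2[OF continuous_on_latitude_integral]) (auto intro!: continuous_intros)
  moreover have "integral {0..2*pi} (\<lambda>t. ?m (r * cos t)) = 0" if "r \<in> {0..1}" for r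
    using integral_latitude_integral_eq_0[of r] that by simp
  ultimately have "?m 1 + ?m (-1) = 0"
    by (rule even_part_at_1_eq_0_if_circle_means_vanish)
  moreover have "latitude_integral K n f g 1 = 2*pi * K n" "latitude_integral K n f g (-1) = 2*pi * K (-n)"
    by (simp_all add: latitude_integral_def)
  moreover have "K (-n) = K n"
    using antipodal_eq[OF f n] nf by (simp add: inner_commute)
  ultimately show ?thesis
    by simp
qed

end

theorem kernel_eq_0:
  assumes dim: "DIM('a) \<ge> 3" and x: "x \<noteq> 0"
  shows "K x = 0"
proof -
  define n where "n = x /\<^sub>R norm x"
  have n: "norm n = 1"
    using x by (simp add: n_def)
  obtain f g where "norm f = 1" "norm g = 1" "n \<bullet> f = 0" "n \<bullet> g = 0" "f \<bullet> g = 0"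
    using orthonormal_pair_orthogonal_to[OF n dim] .
  then have "K n = 0"
    by (intro kernel_at_unit_eq_0[OF n])
  moreover have "K x = K (norm x *\<^sub>R n)"
    using x by (simp add: n_def)
  moreover have "K (norm x *\<^sub>R n) = K n"
    using x n by (intro homogeneous) auto
  ultimately show ?thesis
    by simp
qed

end

theorem corollaryB4:
  fixes K :: "real^3 \<Rightarrow> real"
  assumes cont: "continuous_on (UNIV - {0}) K"
    and bdd: "bounded (K ` (UNIV - {0}))"
    and hom: "\<And>(c::real) x. c > 0 \<Longrightarrow> x \<noteq> 0 \<Longrightarrow> K (c *\<^sub>R x) = K x"
    and orth: "line_distance_orthogonal 1 K"
  shows "\<forall>x. x \<noteq> 0 \<longrightarrow> K x = 0"
proof -
  interpret homogeneous_orthogonal_kernel K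
    using cont hom orth by unfold_locales
  show ?thesis
    using kernel_eq_0 by simp
qed

end
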